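(* Let $\beta>0$ and $\mathcal P$ a parameter set. For all $j\in\{0,\dots,r\}$ and all $n\in\mathbb Z$ there exists a constant $0<l^+_{j,n}<\infty$ such that for all $f\in\mathcal H(\beta,\mathcal P)$, $$\sup_{y\in[n\gamma,(n+1)\gamma]}\big|(\ln f)^{(j)}(y)\big|\le l^+_{j,n}.$$
   Context: $\psi(x)=\pi^{-1/2}e^{-x^2}$. For $\beta>0$, $r$ is the largest integer strictly less than $\beta$. A parameter set $\mathcal{P}=\{\gamma,l^+,L,\varepsilon,C,\alpha,\xi,M\}$ consists of a polynomial $L$ and positive constants; $\mathcal H(\beta,\mathcal P)$ is the set of probability densities $f$ on $\mathbb R$ with: $\ln f$ $r$ times differentiable, $|(\ln f)^{(r)}(x)-(\ln f)^{(r)}(y)|\le r!L(x)|y-x|^{\beta-r}$ whenever $|x-y|\le\gamma$, $|(\ln f)^{(j)}(0)|\le l^+$ for $j=0..r$; $\int|(\ln f)^{(j)}|^{(2\beta+\varepsilon)/j}f\le C$ ($j=1..r$), $\int|L|^{2+\varepsilon/\beta}f\le C$; $f\le M\psi$; $f>0$ nondecreasing on $(-\infty,-\alpha)$, nonincreasing on $(\alpha,\infty)$, $f\ge\xi$ on $[-\alpha,\alpha]$. *)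

theory Defs
  imports "HOL-Analysis.Analysis" "HOL-Computational_Algebra.Polynomial"
begin

definition psi :: "real \<Rightarrow> real" where
  "psi x = exp (- (x ^ 2)) / sqrt pi"

text \<open>r = largest integer strictly less than beta (beta > 0).\<close>
definition r_of :: "real \<Rightarrow> nat" where
  "r_of \<beta> = nat (\<lceil>\<beta>\<rceil> - 1)"

definition lnder :: "nat \<Rightarrow> (real \<Rightarrow> real) \<Rightarrow> real \<Rightarrow> real" where
  "lnder j f = (deriv ^^ j) (\<lambda>x. ln (f x))"

definition HolderClass ::
  "real \<Rightarrow> real \<Rightarrow> real \<Rightarrow> real poly \<Rightarrow> real \<Rightarrow> real \<Rightarrow> real \<Rightarrow> real \<Rightarrow> real
     \<Rightarrow> (real \<Rightarrow> real) set" where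
  "HolderClass \<beta> \<gamma> lp L \<epsilon> C \<alpha> \<xi> M = {f.
     \<comment> \<open>probability density on R\<close>
     f \<in> borel_measurable borel \<and> (\<forall>x. 0 \<le> f x) \<and>
     (\<integral>\<^sup>+ x. ennreal (f x) \<partial>lborel) = 1 \<and>
     \<comment> \<open>ln f is r times differentiable\<close>
     (\<forall>j < r_of \<beta>. \<forall>x. lnder j f differentiable at x) \<and>
     \<comment> \<open>local Hoelder condition on the r-th derivative\<close>
     (\<forall>x y. \<bar>x - y\<bar> \<le> \<gamma> \<longrightarrow>
        \<bar>lnder (r_of \<beta>) f x - lnder (r_of \<beta>) f y\<bar>
          \<le> fact (r_of \<beta>) * poly L x * \<bar>y - x\<bar> powr (\<beta> - real (r_of \<beta>))) \<and>
     (\<forall>j \<le> r_of \<beta>. \<bar>lnder j f 0\<bar> \<le> lp) \<and>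
     (\<forall>j \<in> {1..r_of \<beta>}.
        (\<integral>\<^sup>+ x. ennreal (\<bar>lnder j f x\<bar> powr ((2 * \<beta> + \<epsilon>) / real j) * f x) \<partial>lborel)
          \<le> ennreal C) \<and>
     (\<integral>\<^sup>+ x. ennreal (\<bar>poly L x\<bar> powr (2 + \<epsilon> / \<beta>) * f x) \<partial>lborel) \<le> ennreal C \<and>
     (\<forall>x. f x \<le> M * psi x) \<and>
     (\<forall>x. x < - \<alpha> \<longrightarrow> 0 < f x) \<and> (\<forall>x. \<alpha> < x \<longrightarrow> 0 < f x) \<and>
     mono_on {..< - \<alpha>} f \<and> antimono_on {\<alpha> <..} f \<and>
     (\<forall>x \<in> {-\<alpha>..\<alpha>}. \<xi> \<le> f x)}"

end

theory Submission
  imports Defs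
begin

text \<open>On \<open>[-R, R]\<close> the polynomial \<open>L\<close> is bounded, so the Hoelder condition bounds every
  increment of \<open>(ln f)^(r)\<close> over a step of length \<open>\<gamma>\<close> by one constant; walking from \<open>0\<close>
  in finitely many such steps and using \<open>|(ln f)^(r)(0)| \<le> l\<^sup>+\<close> bounds \<open>(ln f)^(r)\<close> on
  \<open>[-R, R]\<close> uniformly over the class. Descending from \<open>r\<close> to \<open>j\<close>, the mean value theorem and
  \<open>|(ln f)^(j)(0)| \<le> l\<^sup>+\<close> turn a uniform bound on \<open>(ln f)^(j+1)\<close> into one on \<open>(ln f)^(j)\<close>.\<close>

lemma r_of_less: "0 < \<beta> \<Longrightarrow> real (r_of \<beta>) < \<beta>"
  unfolding r_of_def by (simp add: one_le_ceiling) linarith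

lemma lnder_Suc: "lnder (Suc j) f = deriv (lnder j f)"
  unfolding lnder_def by simp

lemma abs_le_by_chained_increments:
  fixes g :: "real \<Rightarrow> real"
  assumes "0 < \<gamma>" and g0: "\<bar>g 0\<bar> \<le> a"
    and step: "\<And>x y. \<bar>x\<bar> \<le> real K * \<gamma> \<Longrightarrow> \<bar>x - y\<bar> \<le> \<gamma> \<Longrightarrow> \<bar>g x - g y\<bar> \<le> c"
    and y: "\<bar>y\<bar> \<le> real K * \<gamma>"
  shows "\<bar>g y\<bar> \<le> a + real K * c"
proof -
  have "k \<le> K \<Longrightarrow> \<bar>y\<bar> \<le> real k * \<gamma> \<Longrightarrow> \<bar>g y\<bar> \<le> a + real k * c" for k y
  proof (induction k arbitrary: y)
    case 0
    then show ?case using g0 by simp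
  next
    case (Suc k)
    define x where "x = max (- (real k * \<gamma>)) (min (real k * \<gamma>) y)"
    have "0 \<le> real k * \<gamma>"
      using \<open>0 < \<gamma>\<close> by simp
    then have x: "\<bar>x\<bar> \<le> real k * \<gamma>" "\<bar>x - y\<bar> \<le> \<gamma>"
      using Suc.prems(2) \<open>0 < \<gamma>\<close> unfolding x_def
      by (auto simp: abs_le_iff max_def min_def algebra_simps)
    have "real k * \<gamma> \<le> real K * \<gamma>"
      using Suc.prems(1) \<open>0 < \<gamma>\<close> by (intro mult_right_mono) auto
    then have "\<bar>g x - g y\<bar> \<le> c"
      using x by (intro step) auto
    moreover have "\<bar>g x\<bar> \<le> a + real k * c"
      using Suc x by simp
    ultimately show ?case by (simp add: algebra_simps)
  qed
  then show ?thesis using y by simp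
qed

lemma abs_le_by_deriv_bound:
  fixes g :: "real \<Rightarrow> real"
  assumes diff: "\<And>x. g differentiable at x"
    and D: "\<And>x. \<bar>x\<bar> \<le> R \<Longrightarrow> \<bar>deriv g x\<bar> \<le> D"
    and g0: "\<bar>g 0\<bar> \<le> a" and y: "\<bar>y\<bar> \<le> R"
  shows "\<bar>g y\<bar> \<le> a + R * D"
proof -
  have der: "(g has_field_derivative deriv g x) (at x within {-R..R})" for x
    using diff by (simp add: DERIV_deriv_iff_real_differentiable has_field_derivative_at_within)
  have "norm (g y - g 0) \<le> D * norm (y - 0)"
    by (rule field_differentiable_bound[OF convex_real_interval(5) der]) (use D y in auto)
  moreover have "0 \<le> D"
    using D[of 0] y abs_ge_zero[of "deriv g 0"] by linarith
  then have "D * \<bar>y\<bar> \<le> R * D"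
    using y by (simp add: mult.commute mult_left_mono)
  ultimately show ?thesis using g0 by simp
qed

lemma lnder_top_increment_le:
  assumes f: "f \<in> HolderClass \<beta> \<gamma> lp L \<epsilon> C \<alpha> \<xi> M" and "0 < \<beta>"
    and xy: "\<bar>x - y\<bar> \<le> \<gamma>" and B: "poly L x \<le> B" "0 \<le> B"
  shows "\<bar>lnder (r_of \<beta>) f x - lnder (r_of \<beta>) f y\<bar>
           \<le> fact (r_of \<beta>) * B * \<gamma> powr (\<beta> - real (r_of \<beta>))"
proof -
  have "\<bar>lnder (r_of \<beta>) f x - lnder (r_of \<beta>) f y\<bar>
          \<le> fact (r_of \<beta>) * poly L x * \<bar>y - x\<bar> powr (\<beta> - real (r_of \<beta>))"
    using f xy unfolding HolderClass_def by blast
  also have "\<dots> \<le> fact (r_of \<beta>) * B * \<bar>y - x\<bar> powr (\<beta> - real (r_of \<beta>))"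
    using B by (intro mult_right_mono mult_left_mono) auto
  also have "\<dots> \<le> fact (r_of \<beta>) * B * \<gamma> powr (\<beta> - real (r_of \<beta>))"
    using B xy r_of_less[OF \<open>0 < \<beta>\<close>]
    by (intro mult_left_mono powr_mono2) (auto simp: abs_minus_commute)
  finally show ?thesis .
qed

lemma lnder_top_uniformly_bounded:
  assumes "0 < \<beta>" "0 < \<gamma>"
  shows "\<exists>D. \<forall>f \<in> HolderClass \<beta> \<gamma> lp L \<epsilon> C \<alpha> \<xi> M. \<forall>y. \<bar>y\<bar> \<le> R \<longrightarrow> \<bar>lnder (r_of \<beta>) f y\<bar> \<le> D"
proof -
  obtain K :: nat where "R / \<gamma> \<le> real K"
    using real_arch_simple by blast
  then have RK: "R \<le> real K * \<gamma>"
    using \<open>0 < \<gamma>\<close> by (simp add: divide_le_eq)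
  have "compact (poly L ` cball 0 (real K * \<gamma>))"
    by (intro compact_continuous_image continuous_intros) auto
  then obtain B where B: "\<And>x. \<bar>x\<bar> \<le> real K * \<gamma> \<Longrightarrow> \<bar>poly L x\<bar> \<le> B"
    using compact_imp_bounded bounded_iff by (metis image_eqI mem_cball_0 real_norm_def)
  have "0 \<le> B"
    using B[of 0] \<open>0 < \<gamma>\<close> abs_ge_zero[of "poly L 0"] by simp
  define c where "c = fact (r_of \<beta>) * B * \<gamma> powr (\<beta> - real (r_of \<beta>))"
  have "\<bar>lnder (r_of \<beta>) f y\<bar> \<le> lp + real K * c"
    if f: "f \<in> HolderClass \<beta> \<gamma> lp L \<epsilon> C \<alpha> \<xi> M" and y: "\<bar>y\<bar> \<le> R" for f y
  proof (rule abs_le_by_chained_increments[where g = "lnder (r_of \<beta>) f", OF \<open>0 < \<gamma>\<close>])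
    show "\<bar>lnder (r_of \<beta>) f 0\<bar> \<le> lp"
      using f unfolding HolderClass_def by blast
    show "\<bar>lnder (r_of \<beta>) f x - lnder (r_of \<beta>) f z\<bar> \<le> c"
      if "\<bar>x\<bar> \<le> real K * \<gamma>" "\<bar>x - z\<bar> \<le> \<gamma>" for x z
      unfolding c_def using B[OF that(1)] \<open>0 \<le> B\<close>
      by (intro lnder_top_increment_le[OF f \<open>0 < \<beta>\<close> that(2)]) auto
    show "\<bar>y\<bar> \<le> real K * \<gamma>"
      using y RK by linarith
  qed
  then show ?thesis by blast
qed

lemma lnder_uniformly_bounded:
  assumes "0 < \<beta>" "0 < \<gamma>" "j \<le> r_of \<beta>"
  shows "\<exists>D. \<forall>f \<in> HolderClass \<beta> \<gamma> lp L \<epsilon> C \<alpha> \<xi> M. \<forall>y. \<bar>y\<bar> \<le> R \<longrightarrow> \<bar>lnder j f y\<bar> \<le> D"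
  using assms(3)
proof (induction j rule: inc_induct)
  case base
  show ?case using lnder_top_uniformly_bounded[OF assms(1,2)] .
next
  case (step j)
  then obtain D where D: "\<forall>f \<in> HolderClass \<beta> \<gamma> lp L \<epsilon> C \<alpha> \<xi> M. \<forall>y. \<bar>y\<bar> \<le> R \<longrightarrow>
      \<bar>deriv (lnder j f) y\<bar> \<le> D"
    by (auto simp: lnder_Suc)
  have "\<bar>lnder j f y\<bar> \<le> lp + R * D"
    if f: "f \<in> HolderClass \<beta> \<gamma> lp L \<epsilon> C \<alpha> \<xi> M" and y: "\<bar>y\<bar> \<le> R" for f y
  proof (rule abs_le_by_deriv_bound[OF _ _ _ y])
    show "lnder j f differentiable at x" for x
      using f \<open>j < r_of \<beta>\<close> unfolding HolderClass_def by blast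
    show "\<bar>lnder j f 0\<bar> \<le> lp"
      using f \<open>j < r_of \<beta>\<close> unfolding HolderClass_def by auto
  qed (use D f in auto)
  then show ?case by blast
qed

theorem lemma11:
  fixes \<beta> \<gamma> lp \<epsilon> C \<alpha> \<xi> M :: real and L :: "real poly"
  assumes "0 < \<beta>" "0 < \<gamma>" "0 < lp" "0 < \<epsilon>" "0 < C" "0 < \<alpha>" "0 < \<xi>" "0 < M"
  shows "\<forall>j \<le> r_of \<beta>. \<forall>n :: int. \<exists>l :: real. 0 < l \<and>
           (\<forall>f \<in> HolderClass \<beta> \<gamma> lp L \<epsilon> C \<alpha> \<xi> M.
              \<forall>y \<in> {real_of_int n * \<gamma> .. (real_of_int n + 1) * \<gamma>}. \<bar>lnder j f y\<bar> \<le> l)"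
proof (intro allI impI)
  fix j :: nat and n :: int
  assume "j \<le> r_of \<beta>"
  define R where "R = (\<bar>real_of_int n\<bar> + 1) * \<gamma>"
  obtain D where D: "\<forall>f \<in> HolderClass \<beta> \<gamma> lp L \<epsilon> C \<alpha> \<xi> M. \<forall>y. \<bar>y\<bar> \<le> R \<longrightarrow> \<bar>lnder j f y\<bar> \<le> D"
    using lnder_uniformly_bounded[OF assms(1,2) \<open>j \<le> r_of \<beta>\<close>] by blast
  have "\<bar>real_of_int n * \<gamma>\<bar> = \<bar>real_of_int n\<bar> * \<gamma>"
    using \<open>0 < \<gamma>\<close> by (simp add: abs_mult)
  then have "\<bar>y\<bar> \<le> R" if "y \<in> {real_of_int n * \<gamma> .. (real_of_int n + 1) * \<gamma>}" for y
    using that unfolding R_def by (auto simp: algebra_simps abs_le_iff)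
  then show "\<exists>l. 0 < l \<and> (\<forall>f \<in> HolderClass \<beta> \<gamma> lp L \<epsilon> C \<alpha> \<xi> M.
      \<forall>y \<in> {real_of_int n * \<gamma> .. (real_of_int n + 1) * \<gamma>}. \<bar>lnder j f y\<bar> \<le> l)"
    using D by (intro exI[of _ "max 1 D"]) force
qed

end
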